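(* Fix an integer $c\ge1$, let $A=\mathbb{K}[x_ix_j: i,j\in\mathbb{N},\ i\le j\le i+c]\subseteq\mathbb{K}[x_i: i\in\mathbb{N}]$, and let $\varphi:\mathbb{K}[x_{i,j}: i\in[c+1], j\in\mathbb{N}]\to A$ be the surjective $\mathbb{K}$-algebra homomorphism with $x_{i,j}\mapsto x_jx_{i+j-1}$. Then the presentation ideal $I=\ker\varphi$ is finitely generated up to shifting by quadrics, i.e. there is a finite set $F$ of quadratic polynomials in $I$ such that $\{\operatorname{sh}_k(f): f\in F, k\in\mathbb{N}_0\}$ generates $I$.
   Context: $\mathbb{K}$ is a field; $\operatorname{sh}_k$ is the ring endomorphism of $\mathbb{K}[x_{i,j}: i\in[c+1],j\in\mathbb{N}]$ with $x_{i,j}\mapsto x_{i,j+k}$ (so that $\varphi$ commutes with the shift $x_i\mapsto x_{i+k}$). *)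

theory Defs
  imports Main "HOL-Library.Poly_Mapping"
begin

type_synonym ('v, 'k) mpoly = "('v \<Rightarrow>\<^sub>0 nat) \<Rightarrow>\<^sub>0 'k"

definition mVar :: "'v \<Rightarrow> ('v, 'k::comm_semiring_1) mpoly" where
  "mVar v = Poly_Mapping.single (Poly_Mapping.single v 1) 1"

definition mConst :: "'k::comm_semiring_1 \<Rightarrow> ('v, 'k) mpoly" where
  "mConst a = Poly_Mapping.single 0 a"

definition msubst :: "('v \<Rightarrow> ('w, 'k::comm_semiring_1) mpoly) \<Rightarrow> ('v, 'k) mpoly \<Rightarrow> ('w, 'k) mpoly" where
  "msubst \<sigma> p = (\<Sum>m\<in>Poly_Mapping.keys p. mConst (Poly_Mapping.lookup p m) * (\<Prod>v\<in>Poly_Mapping.keys (m :: 'v \<Rightarrow>\<^sub>0 nat). \<sigma> v ^ Poly_Mapping.lookup m v))"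

definition mvars :: "('v, 'k::zero) mpoly \<Rightarrow> 'v set" where
  "mvars p = \<Union> (Poly_Mapping.keys ` Poly_Mapping.keys p)"

definition total_deg :: "('v \<Rightarrow>\<^sub>0 nat) \<Rightarrow> nat" where
  "total_deg m = (\<Sum>v\<in>Poly_Mapping.keys m. Poly_Mapping.lookup m v)"

definition quadric :: "('v, 'k::zero) mpoly \<Rightarrow> bool" where
  "quadric p \<longleftrightarrow> (\<forall>m\<in>Poly_Mapping.keys p. total_deg m = 2)"

definition srcVars :: "nat \<Rightarrow> (nat \<times> nat) set" where
  "srcVars c = {(i, j). 1 \<le> i \<and> i \<le> c + 1 \<and> 1 \<le> j}"

definition srcRing :: "nat \<Rightarrow> (nat \<times> nat, 'k::comm_semiring_1) mpoly set" where
  "srcRing c = {p. mvars p \<subseteq> srcVars c}"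

definition phi :: "(nat \<times> nat, 'k::comm_semiring_1) mpoly \<Rightarrow> (nat, 'k) mpoly" where
  "phi = msubst (\<lambda>(i, j). mVar j * mVar (i + j - 1))"

definition sh :: "nat \<Rightarrow> (nat \<times> nat, 'k::comm_semiring_1) mpoly \<Rightarrow> (nat \<times> nat, 'k) mpoly" where
  "sh k = msubst (\<lambda>(i, j). mVar (i, j + k))"

definition presIdeal :: "nat \<Rightarrow> (nat \<times> nat, 'k::comm_semiring_1) mpoly set" where
  "presIdeal c = {p \<in> srcRing c. phi p = 0}"

definition ideal_gen :: "'a::comm_ring_1 set \<Rightarrow> 'a set \<Rightarrow> 'a set" where
  "ideal_gen R G = {\<Sum>g\<in>S. r g * g | S r. finite S \<and> S \<subseteq> G \<and> (\<forall>g\<in>S. r g \<in> R)}"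

end

theory Submission
  imports Defs "HOL-Library.Multiset"
begin

text \<open>
  Write \<open>x\<^sub>i\<^sub>,\<^sub>j\<close> as the edge \<open>{j, i + j - 1}\<close> on \<open>\<nat>\<close>. A monomial in the
  \<open>x\<^sub>i\<^sub>,\<^sub>j\<close> is then a multigraph whose edges \<open>{a, b}\<close> satisfy \<open>a \<le> b \<le> a + c\<close>,
  and \<open>\<phi>\<close> sends it to the monomial recording its degree sequence. Hence \<open>I\<close> is spanned by
  the binomials \<open>x^m - x^m'\<close> of multigraphs with equal degrees, and it suffices
  to put these into the ideal generated by shifted quadrics, by induction on the number of
  edges. Let \<open>s \<le> s'\<close> be the two smallest vertices counted with multiplicity. If the edge
  \<open>{s, s'}\<close> is missing, the edges \<open>{s, t}\<close> and \<open>{s', z}\<close> at these vertices can be exchanged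
  for \<open>{s, s'}\<close> and \<open>{min t z, max t z}\<close>; this exchange is a quadratic relation whose
  vertices lie in \<open>[s, s + 2c]\<close>, i.e. a shift of a relation on \<open>[1, 2c + 1]\<close>. So both
  sides of the binomial may be assumed to contain \<open>{s, s'}\<close>, which is then cancelled.
\<close>

lemma poly_mapping_sum_single:
  fixes p :: "'a \<Rightarrow>\<^sub>0 'b::comm_monoid_add"
  shows "p = (\<Sum>m\<in>Poly_Mapping.keys p. Poly_Mapping.single m (Poly_Mapping.lookup p m))"
  by (rule poly_mapping_eqI)
    (simp add: lookup_sum lookup_single when_def in_keys_iff sum.If_cases)

lemma single_sum: "Poly_Mapping.single k (sum f A) = (\<Sum>x\<in>A. Poly_Mapping.single k (f x))"
  by (induction A rule: infinite_finite_induct) (auto simp: single_add)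

lemma keys_add_nat:
  "Poly_Mapping.keys (a + b :: 'a \<Rightarrow>\<^sub>0 nat) = Poly_Mapping.keys a \<union> Poly_Mapping.keys b"
  by (auto simp: in_keys_iff lookup_add)

lemma single_add_diff_single:
  "v \<in> Poly_Mapping.keys m \<Longrightarrow>
     Poly_Mapping.single v 1 + (m - Poly_Mapping.single v 1) = (m :: 'a \<Rightarrow>\<^sub>0 nat)"
  by (rule poly_mapping_eqI) (auto simp: lookup_add lookup_minus lookup_single in_keys_iff when_def)

lemma keys_diff_single_subset:
  "Poly_Mapping.keys (m - Poly_Mapping.single v (1::nat)) \<subseteq> Poly_Mapping.keys m"
  by (auto simp: in_keys_iff lookup_minus)

section \<open>Monomial maps\<close>

definition map_monomials :: "('a \<Rightarrow> 'b) \<Rightarrow> ('a \<Rightarrow>\<^sub>0 'k::comm_monoid_add) \<Rightarrow> 'b \<Rightarrow>\<^sub>0 'k" where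
  "map_monomials f p =
     (\<Sum>m\<in>Poly_Mapping.keys p. Poly_Mapping.single (f m) (Poly_Mapping.lookup p m))"

lemma map_monomials_eq_sum:
  assumes "finite S" "Poly_Mapping.keys p \<subseteq> S"
  shows "map_monomials f p = (\<Sum>m\<in>S. Poly_Mapping.single (f m) (Poly_Mapping.lookup p m))"
  unfolding map_monomials_def
  by (rule sum.mono_neutral_left) (use assms in \<open>auto simp: in_keys_iff\<close>)

lemma map_monomials_zero [simp]: "map_monomials f 0 = 0"
  by (simp add: map_monomials_def)

lemma map_monomials_single [simp]:
  "map_monomials f (Poly_Mapping.single m a) = Poly_Mapping.single (f m) a"
  by (simp add: map_monomials_def)

lemma map_monomials_add: "map_monomials f (p + q) = map_monomials f p + map_monomials f q"
proof -
  let ?S = "Poly_Mapping.keys p \<union> Poly_Mapping.keys q"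
  have "Poly_Mapping.keys (p + q) \<subseteq> ?S"
    by (rule keys_add)
  then show ?thesis
    by (simp add: map_monomials_eq_sum[of ?S] lookup_add single_add sum.distrib)
qed

lemma map_monomials_diff:
  fixes p q :: "'a \<Rightarrow>\<^sub>0 'k::ab_group_add"
  shows "map_monomials f (p - q) = map_monomials f p - map_monomials f q"
proof -
  let ?S = "Poly_Mapping.keys p \<union> Poly_Mapping.keys q"
  have "Poly_Mapping.keys (p - q) \<subseteq> ?S"
    by (rule keys_diff)
  then show ?thesis
    by (simp add: map_monomials_eq_sum[of ?S] lookup_minus single_diff sum_subtractf)
qed

lemma map_monomials_sum: "map_monomials f (\<Sum>i\<in>I. g i) = (\<Sum>i\<in>I. map_monomials f (g i))"
  by (induction I rule: infinite_finite_induct) (auto simp: map_monomials_add)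

lemma map_monomials_mult:
  fixes p q :: "'a::comm_monoid_add \<Rightarrow>\<^sub>0 'k::comm_semiring_1"
  assumes "\<And>a b. f (a + b) = f a + f b"
  shows "map_monomials f (p * q) = map_monomials f p * map_monomials f q"
proof -
  have "p * q = (\<Sum>m\<in>Poly_Mapping.keys p. \<Sum>n\<in>Poly_Mapping.keys q.
      Poly_Mapping.single (m + n) (Poly_Mapping.lookup p m * Poly_Mapping.lookup q n))"
    by (subst poly_mapping_sum_single[of p], subst poly_mapping_sum_single[of q])
      (simp only: sum_product mult_single)
  then have "map_monomials f (p * q) = (\<Sum>m\<in>Poly_Mapping.keys p. \<Sum>n\<in>Poly_Mapping.keys q.
      Poly_Mapping.single (f m + f n) (Poly_Mapping.lookup p m * Poly_Mapping.lookup q n))"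
    by (simp only: map_monomials_sum map_monomials_single assms)
  then show ?thesis
    by (simp only: map_monomials_def sum_product mult_single)
qed

lemma lookup_map_monomials:
  "Poly_Mapping.lookup (map_monomials f p) n =
     (\<Sum>m | m \<in> Poly_Mapping.keys p \<and> f m = n. Poly_Mapping.lookup p m)"
  by (simp add: map_monomials_def lookup_sum lookup_single when_def sum.inter_filter)

lemma map_monomials_eq_0_imp_binomial_sum:
  fixes p :: "'a \<Rightarrow>\<^sub>0 'k::ab_group_add"
  assumes "map_monomials f p = 0"
  obtains \<rho> where "\<And>m. m \<in> Poly_Mapping.keys p \<Longrightarrow> \<rho> m \<in> Poly_Mapping.keys p \<and> f (\<rho> m) = f m"
    and "p = (\<Sum>m\<in>Poly_Mapping.keys p.
               Poly_Mapping.single m (Poly_Mapping.lookup p m)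
             - Poly_Mapping.single (\<rho> m) (Poly_Mapping.lookup p m))"
proof -
  let ?K = "Poly_Mapping.keys p"
  define rep where "rep n = (SOME m. m \<in> ?K \<and> f m = n)" for n
  have rep: "rep (f m) \<in> ?K \<and> f (rep (f m)) = f m" if "m \<in> ?K" for m
    unfolding rep_def by (rule someI[of _ m]) (use that in simp)
  have fibre_sum: "(\<Sum>m | m \<in> ?K \<and> f m = n. Poly_Mapping.lookup p m) = 0" for n
    using arg_cong[OF assms, of "\<lambda>q. Poly_Mapping.lookup q n"] by (simp add: lookup_map_monomials)
  have "(\<Sum>m\<in>?K. Poly_Mapping.single (rep (f m)) (Poly_Mapping.lookup p m))
      = (\<Sum>n\<in>f ` ?K. \<Sum>m | m \<in> ?K \<and> f m = n. Poly_Mapping.single (rep (f m)) (Poly_Mapping.lookup p m))"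
    by (rule sum.image_gen) simp
  also have "\<dots> = (\<Sum>n\<in>f ` ?K. \<Sum>m | m \<in> ?K \<and> f m = n. Poly_Mapping.single (rep n) (Poly_Mapping.lookup p m))"
    by (intro sum.cong) auto
  also have "\<dots> = 0"
    by (simp add: single_sum[symmetric] fibre_sum)
  finally have "p = (\<Sum>m\<in>?K. Poly_Mapping.single m (Poly_Mapping.lookup p m)
                           - Poly_Mapping.single (rep (f m)) (Poly_Mapping.lookup p m))"
    by (simp add: sum_subtractf poly_mapping_sum_single[symmetric])
  with rep show thesis
    by (rule that)
qed

text \<open>\<open>subst_exponents L m\<close> is the exponent of the image of \<open>x\<^sup>m\<close> under the substitution
  \<open>x\<^sub>v \<mapsto> \<Prod>w \<leftarrow> L v. x\<^sub>w\<close>.\<close>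
definition subst_exponents :: "('v \<Rightarrow> 'w list) \<Rightarrow> ('v \<Rightarrow>\<^sub>0 nat) \<Rightarrow> 'w \<Rightarrow>\<^sub>0 nat" where
  "subst_exponents L m =
     (\<Sum>v\<in>Poly_Mapping.keys m. \<Sum>w\<leftarrow>L v. Poly_Mapping.single w (Poly_Mapping.lookup m v))"

lemma subst_exponents_eq_sum:
  assumes "finite S" "Poly_Mapping.keys m \<subseteq> S"
  shows "subst_exponents L m = (\<Sum>v\<in>S. \<Sum>w\<leftarrow>L v. Poly_Mapping.single w (Poly_Mapping.lookup m v))"
  unfolding subst_exponents_def
  by (rule sum.mono_neutral_left) (use assms in \<open>auto simp: in_keys_iff\<close>)

lemma subst_exponents_add: "subst_exponents L (a + b) = subst_exponents L a + subst_exponents L b"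
proof -
  let ?S = "Poly_Mapping.keys a \<union> Poly_Mapping.keys b"
  have "Poly_Mapping.keys (a + b) \<subseteq> ?S"
    by (rule keys_add)
  then show ?thesis
    by (simp add: subst_exponents_eq_sum[of ?S] lookup_add single_add sum_list_addf sum.distrib)
qed

lemma subst_exponents_single:
  "subst_exponents L (Poly_Mapping.single v n) = (\<Sum>w\<leftarrow>L v. Poly_Mapping.single w n)"
  by (cases "n = 0") (simp_all add: subst_exponents_def)

lemma keys_subst_exponents:
  "Poly_Mapping.keys (subst_exponents L m) = (\<Union>v\<in>Poly_Mapping.keys m. set (L v))"
proof -
  have keys_sum_list: "Poly_Mapping.keys (\<Sum>w\<leftarrow>ws. Poly_Mapping.single w n) = set ws"
    if "n \<noteq> 0" for ws and n :: nat
    using that by (induction ws) (simp_all add: keys_add_nat)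
  have "Poly_Mapping.keys (\<Sum>v\<in>V. \<Sum>w\<leftarrow>L v. Poly_Mapping.single w (Poly_Mapping.lookup m v))
        = (\<Union>v\<in>V. set (L v))" if "finite V" "V \<subseteq> Poly_Mapping.keys m" for V
    using that
  proof (induction V rule: finite_induct)
    case (insert v V)
    then have "Poly_Mapping.lookup m v \<noteq> 0"
      by (simp add: in_keys_iff)
    with insert show ?case
      by (simp add: keys_add_nat keys_sum_list[OF \<open>Poly_Mapping.lookup m v \<noteq> 0\<close>])
  qed simp
  then show ?thesis
    by (simp add: subst_exponents_def)
qed

lemma single_prod:
  "(\<Prod>v\<in>K. Poly_Mapping.single (h v) (1::'k::comm_semiring_1)) = Poly_Mapping.single (\<Sum>v\<in>K. h v) 1"
  by (induction K rule: infinite_finite_induct) (simp_all add: mult_single)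

lemma msubst_eq_map_monomials:
  fixes \<sigma> :: "'v \<Rightarrow> ('w, 'k::comm_semiring_1) mpoly"
  assumes "\<And>v. \<sigma> v = Poly_Mapping.single (\<Sum>w\<leftarrow>L v. Poly_Mapping.single w 1) 1"
  shows "msubst \<sigma> = map_monomials (subst_exponents L)"
proof
  fix p :: "('v, 'k) mpoly"
  have power: "\<sigma> v ^ n = Poly_Mapping.single (\<Sum>w\<leftarrow>L v. Poly_Mapping.single w n) 1" for v n
  proof (induction n)
    case (Suc n)
    have "(\<Sum>w\<leftarrow>L v. Poly_Mapping.single w (1::nat)) + (\<Sum>w\<leftarrow>L v. Poly_Mapping.single w n)
          = (\<Sum>w\<leftarrow>L v. Poly_Mapping.single w (Suc n))"
      by (simp add: sum_list_addf[symmetric] single_add[symmetric])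
    with Suc show ?case
      by (simp add: assms mult_single)
  qed simp
  have "(\<Prod>v\<in>Poly_Mapping.keys m. \<sigma> v ^ Poly_Mapping.lookup m v)
        = Poly_Mapping.single (subst_exponents L m) 1" for m :: "'v \<Rightarrow>\<^sub>0 nat"
    unfolding power single_prod subst_exponents_def ..
  then show "msubst \<sigma> p = map_monomials (subst_exponents L) p"
    by (simp add: msubst_def map_monomials_def mConst_def mult_single)
qed

lemma total_deg_eq_sum:
  assumes "finite S" "Poly_Mapping.keys m \<subseteq> S"
  shows "total_deg m = (\<Sum>v\<in>S. Poly_Mapping.lookup m v)"
  unfolding total_deg_def
  by (rule sum.mono_neutral_left) (use assms in \<open>auto simp: in_keys_iff\<close>)

lemma total_deg_add: "total_deg (a + b) = total_deg a + total_deg b"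
proof -
  let ?S = "Poly_Mapping.keys a \<union> Poly_Mapping.keys b"
  have "Poly_Mapping.keys (a + b) \<subseteq> ?S"
    by (rule keys_add)
  then show ?thesis
    by (simp add: total_deg_eq_sum[of ?S] lookup_add sum.distrib)
qed

lemma total_deg_single [simp]: "total_deg (Poly_Mapping.single v n) = n"
  by (simp add: total_deg_def)

lemma mvars_subset_iff: "mvars p \<subseteq> V \<longleftrightarrow> (\<forall>m\<in>Poly_Mapping.keys p. Poly_Mapping.keys m \<subseteq> V)"
  by (auto simp: mvars_def)

lemma mvars_single: "mvars (Poly_Mapping.single m a) \<subseteq> Poly_Mapping.keys m"
  by (simp add: mvars_def)

lemma mvars_add: "mvars (p + q) \<subseteq> mvars p \<union> mvars q"
  unfolding mvars_def using keys_add[of p q] by blast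

lemma mvars_uminus [simp]: "mvars (- p) = mvars p"
  by (simp add: mvars_def)

lemma mvars_mult: "mvars (p * q) \<subseteq> mvars p \<union> mvars q"
proof
  fix v
  assume "v \<in> mvars (p * q)"
  then obtain m where m: "m \<in> Poly_Mapping.keys (p * q)" "v \<in> Poly_Mapping.keys m"
    by (auto simp: mvars_def)
  then obtain a b where "m = a + b" "a \<in> Poly_Mapping.keys p" "b \<in> Poly_Mapping.keys q"
    using keys_mult[of p q] by blast
  with m(2) keys_add[of a b] show "v \<in> mvars p \<union> mvars q"
    by (auto simp: mvars_def)
qed

section \<open>Ideals generated inside a subring\<close>

lemma ideal_gen_sumI:
  "finite S \<Longrightarrow> S \<subseteq> G \<Longrightarrow> (\<And>g. g \<in> S \<Longrightarrow> r g \<in> R) \<Longrightarrow> (\<Sum>g\<in>S. r g * g) \<in> ideal_gen R G"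
  unfolding ideal_gen_def by blast

lemma ideal_gen_subset:
  assumes "0 \<in> I" and "\<And>a b. a \<in> I \<Longrightarrow> b \<in> I \<Longrightarrow> a + b \<in> I"
    and "\<And>r g. r \<in> R \<Longrightarrow> g \<in> G \<Longrightarrow> r * g \<in> I"
  shows "ideal_gen R G \<subseteq> I"
proof
  fix p
  assume "p \<in> ideal_gen R G"
  then obtain S r where "finite S" "S \<subseteq> G" "\<forall>g\<in>S. r g \<in> R" "p = (\<Sum>g\<in>S. r g * g)"
    by (auto simp: ideal_gen_def)
  then show "p \<in> I"
  proof (induction S arbitrary: p rule: finite_induct)
    case (insert g S)
    then show ?case
      using assms(2)[OF assms(3)] by simp
  qed (simp add: assms(1))
qed

locale subring_carrier =
  fixes R :: "'a::comm_ring_1 set"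
  assumes zero_mem: "0 \<in> R"
    and add_mem: "a \<in> R \<Longrightarrow> b \<in> R \<Longrightarrow> a + b \<in> R"
    and uminus_mem: "a \<in> R \<Longrightarrow> - a \<in> R"
    and mult_mem: "a \<in> R \<Longrightarrow> b \<in> R \<Longrightarrow> a * b \<in> R"
begin

lemma diff_mem: "a \<in> R \<Longrightarrow> b \<in> R \<Longrightarrow> a - b \<in> R"
  using add_mem[of a "- b"] uminus_mem[of b] by simp

lemma ideal_gen_zero: "0 \<in> ideal_gen R G"
  using ideal_gen_sumI[of "{}" G] by simp

lemma ideal_gen_generator: "g \<in> G \<Longrightarrow> r \<in> R \<Longrightarrow> r * g \<in> ideal_gen R G"
  using ideal_gen_sumI[of "{g}" G "\<lambda>_. r"] by simp

lemma ideal_gen_add: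
  assumes "p \<in> ideal_gen R G" "q \<in> ideal_gen R G"
  shows "p + q \<in> ideal_gen R G"
proof -
  obtain S r where S: "finite S" "S \<subseteq> G" "\<forall>g\<in>S. r g \<in> R" and p: "p = (\<Sum>g\<in>S. r g * g)"
    using assms(1) by (auto simp: ideal_gen_def)
  obtain T s where T: "finite T" "T \<subseteq> G" "\<forall>g\<in>T. s g \<in> R" and q: "q = (\<Sum>g\<in>T. s g * g)"
    using assms(2) by (auto simp: ideal_gen_def)
  define r' where "r' g = (if g \<in> S then r g else 0)" for g
  define s' where "s' g = (if g \<in> T then s g else 0)" for g
  have "p = (\<Sum>g\<in>S \<union> T. r' g * g)" "q = (\<Sum>g\<in>S \<union> T. s' g * g)"
    unfolding p q r'_def s'_def using S(1) T(1) by (auto intro: sum.mono_neutral_cong_right[symmetric])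
  then have "p + q = (\<Sum>g\<in>S \<union> T. (r' g + s' g) * g)"
    by (simp add: sum.distrib distrib_right)
  also have "\<dots> \<in> ideal_gen R G"
    using S T by (intro ideal_gen_sumI) (auto simp: r'_def s'_def intro: add_mem zero_mem)
  finally show ?thesis .
qed

lemma ideal_gen_mult:
  assumes "r \<in> R" "p \<in> ideal_gen R G"
  shows "r * p \<in> ideal_gen R G"
proof -
  obtain S s where S: "finite S" "S \<subseteq> G" "\<forall>g\<in>S. s g \<in> R" and p: "p = (\<Sum>g\<in>S. s g * g)"
    using assms(2) by (auto simp: ideal_gen_def)
  have "r * p = (\<Sum>g\<in>S. (r * s g) * g)"
    by (simp add: p sum_distrib_left mult.assoc)
  also have "\<dots> \<in> ideal_gen R G"
    using S assms(1) by (intro ideal_gen_sumI) (auto intro: mult_mem)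
  finally show ?thesis .
qed

lemma ideal_gen_uminus:
  assumes "p \<in> ideal_gen R G"
  shows "- p \<in> ideal_gen R G"
proof -
  obtain S s where S: "finite S" "S \<subseteq> G" "\<forall>g\<in>S. s g \<in> R" and p: "p = (\<Sum>g\<in>S. s g * g)"
    using assms by (auto simp: ideal_gen_def)
  have "- p = (\<Sum>g\<in>S. (- s g) * g)"
    by (simp add: p sum_negf)
  also have "\<dots> \<in> ideal_gen R G"
    using S by (intro ideal_gen_sumI) (auto intro: uminus_mem)
  finally show ?thesis .
qed

lemma ideal_gen_diff: "p \<in> ideal_gen R G \<Longrightarrow> q \<in> ideal_gen R G \<Longrightarrow> p - q \<in> ideal_gen R G"
  using ideal_gen_add[of p G "- q"] ideal_gen_uminus[of q G] by simp

lemma ideal_gen_diff_trans: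
  assumes "a - a' \<in> ideal_gen R G" "a' - b' \<in> ideal_gen R G" "b - b' \<in> ideal_gen R G"
  shows "a - b \<in> ideal_gen R G"
  using ideal_gen_diff[OF ideal_gen_add[OF assms(1,2)] assms(3)] by simp

lemma ideal_gen_sum: "(\<And>i. i \<in> I \<Longrightarrow> f i \<in> ideal_gen R G) \<Longrightarrow> sum f I \<in> ideal_gen R G"
  by (induction I rule: infinite_finite_induct) (auto intro: ideal_gen_add ideal_gen_zero)

end

interpretation srcRing: subring_carrier "srcRing c :: (nat \<times> nat, 'k::comm_ring_1) mpoly set" for c
proof
  fix p q :: "(nat \<times> nat, 'k) mpoly"
  assume "p \<in> srcRing c" "q \<in> srcRing c"
  then show "p + q \<in> srcRing c" "p * q \<in> srcRing c"
    using mvars_add[of p q] mvars_mult[of p q] by (auto simp: srcRing_def)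
qed (simp_all add: srcRing_def mvars_def)

lemma monomial_in_srcRing: "Poly_Mapping.keys m \<subseteq> srcVars c \<Longrightarrow> Poly_Mapping.single m a \<in> srcRing c"
  using mvars_single[of m a] by (simp add: srcRing_def)

section \<open>Variables as edges\<close>

text \<open>\<open>\<phi>\<close> maps \<open>x\<^bsub>edge_var (a, b)\<^esub>\<close> to \<open>x\<^sub>a x\<^sub>b\<close> whenever \<open>a \<le> b\<close>.\<close>
definition edge_var :: "nat \<times> nat \<Rightarrow> nat \<times> nat" where
  "edge_var e = (snd e - fst e + 1, fst e)"

fun is_edge :: "nat \<Rightarrow> nat \<times> nat \<Rightarrow> bool" where
  "is_edge c (a, b) \<longleftrightarrow> 1 \<le> a \<and> a \<le> b \<and> b \<le> a + c"

fun endpoints :: "nat \<times> nat \<Rightarrow> nat multiset" where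
  "endpoints (a, b) = {#a, b#}"

fun shift_edge :: "nat \<Rightarrow> nat \<times> nat \<Rightarrow> nat \<times> nat" where
  "shift_edge k (a, b) = (a + k, b + k)"

definition phi_exp :: "(nat \<times> nat \<Rightarrow>\<^sub>0 nat) \<Rightarrow> nat \<Rightarrow>\<^sub>0 nat" where
  "phi_exp = subst_exponents (\<lambda>(i, j). [j, i + j - 1])"

definition sh_exp :: "nat \<Rightarrow> (nat \<times> nat \<Rightarrow>\<^sub>0 nat) \<Rightarrow> nat \<times> nat \<Rightarrow>\<^sub>0 nat" where
  "sh_exp k = subst_exponents (\<lambda>(i, j). [(i, j + k)])"

lemma phi_eq_map_monomials: "phi = map_monomials phi_exp"
  unfolding phi_def phi_exp_def
  by (rule msubst_eq_map_monomials) (auto simp: mVar_def mult_single)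

lemma sh_eq_map_monomials: "sh k = map_monomials (sh_exp k)"
  unfolding sh_def sh_exp_def
  by (rule msubst_eq_map_monomials) (auto simp: mVar_def)

lemma phi_exp_add: "phi_exp (a + b) = phi_exp a + phi_exp b"
  by (simp add: phi_exp_def subst_exponents_add)

lemma sh_exp_add: "sh_exp k (a + b) = sh_exp k a + sh_exp k b"
  by (simp add: sh_exp_def subst_exponents_add)

lemma phi_mult: "phi (p * q) = phi p * phi q"
  unfolding phi_eq_map_monomials by (rule map_monomials_mult) (rule phi_exp_add)

lemma phi_exp_edge_var:
  "is_edge c e \<Longrightarrow> phi_exp (Poly_Mapping.single (edge_var e) n) = (\<Sum>x\<in>#endpoints e. Poly_Mapping.single x n)"
  by (cases e) (simp add: phi_exp_def edge_var_def subst_exponents_single)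

lemma sh_exp_edge_var:
  "sh_exp k (Poly_Mapping.single (edge_var e) n) = Poly_Mapping.single (edge_var (shift_edge k e)) n"
  by (cases e) (simp add: sh_exp_def edge_var_def subst_exponents_single)

lemma keys_phi_exp: "Poly_Mapping.keys (phi_exp m) = (\<Union>(i, j)\<in>Poly_Mapping.keys m. {j, i + j - 1})"
  by (simp add: phi_exp_def keys_subst_exponents case_prod_beta)

lemma phi_exp_eq_0_iff: "phi_exp m = 0 \<longleftrightarrow> m = 0"
proof -
  have "Poly_Mapping.keys (phi_exp m) = {} \<longleftrightarrow> Poly_Mapping.keys m = {}"
    unfolding keys_phi_exp by (auto simp del: keys_eq_empty split: prod.splits)
  then show ?thesis
    by simp
qed

lemma is_edge_fst_le_snd: "is_edge c e \<Longrightarrow> fst e \<le> snd e"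
  by (cases e) simp

lemma edge_var_in_srcVars: "is_edge c e \<Longrightarrow> edge_var e \<in> srcVars c"
  by (cases e) (auto simp: srcVars_def edge_var_def)

lemma srcVars_edge_var:
  "(i, j) \<in> srcVars c \<Longrightarrow> is_edge c (j, i + j - 1) \<and> edge_var (j, i + j - 1) = (i, j)"
  by (auto simp: srcVars_def edge_var_def)

definition edge_pair :: "nat \<times> nat \<Rightarrow> nat \<times> nat \<Rightarrow> nat \<times> nat \<Rightarrow>\<^sub>0 nat" where
  "edge_pair e f = Poly_Mapping.single (edge_var e) 1 + Poly_Mapping.single (edge_var f) 1"

lemma keys_edge_pair: "Poly_Mapping.keys (edge_pair e f) = {edge_var e, edge_var f}"
  by (auto simp: edge_pair_def keys_add_nat)

lemma total_deg_edge_pair: "total_deg (edge_pair e f) = 2"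
  by (simp add: edge_pair_def total_deg_add)

lemma phi_exp_edge_pair:
  assumes "is_edge c e" "is_edge c f"
  shows "phi_exp (edge_pair e f) = (\<Sum>x\<in>#endpoints e + endpoints f. Poly_Mapping.single x 1)"
  using assms by (simp add: edge_pair_def phi_exp_add phi_exp_edge_var)

lemma sh_exp_edge_pair: "sh_exp k (edge_pair e f) = edge_pair (shift_edge k e) (shift_edge k f)"
  by (simp add: edge_pair_def sh_exp_add sh_exp_edge_var)

section \<open>Quadratic relations and their shifts\<close>

definition quad_binomial ::
    "nat \<times> nat \<Rightarrow> nat \<times> nat \<Rightarrow> nat \<times> nat \<Rightarrow> nat \<times> nat \<Rightarrow> (nat \<times> nat, 'k::comm_ring_1) mpoly" where
  "quad_binomial e f e' f' = Poly_Mapping.single (edge_pair e f) 1 - Poly_Mapping.single (edge_pair e' f') 1"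

definition quad_relation :: "nat \<Rightarrow> nat \<times> nat \<Rightarrow> nat \<times> nat \<Rightarrow> nat \<times> nat \<Rightarrow> nat \<times> nat \<Rightarrow> bool" where
  "quad_relation c e f e' f' \<longleftrightarrow>
     (\<forall>g\<in>{e, f, e', f'}. is_edge c g) \<and> endpoints e + endpoints f = endpoints e' + endpoints f'"

definition quad_gens :: "nat \<Rightarrow> (nat \<times> nat, 'k::comm_ring_1) mpoly set" where
  "quad_gens c = {quad_binomial e f e' f' | e f e' f'.
     quad_relation c e f e' f' \<and> (\<forall>g\<in>{e, f, e', f'}. snd g \<le> 2 * c + 1)}"

abbreviation quad_ideal :: "nat \<Rightarrow> (nat \<times> nat, 'k::comm_ring_1) mpoly set" where
  "quad_ideal c \<equiv> ideal_gen (srcRing c) {sh k f | f k. f \<in> quad_gens c}"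

lemma finite_quad_gens: "finite (quad_gens c)"
proof -
  let ?B = "{..2 * c + 1} \<times> {..2 * c + 1}"
  have "quad_gens c \<subseteq> (\<lambda>(e, f, e', f'). quad_binomial e f e' f') ` (?B \<times> ?B \<times> ?B \<times> ?B)"
  proof
    fix p
    assume "p \<in> quad_gens c"
    then obtain e f e' f' where p: "p = quad_binomial e f e' f'" and "quad_relation c e f e' f'"
      and "\<forall>g\<in>{e, f, e', f'}. snd g \<le> 2 * c + 1"
      by (auto simp: quad_gens_def)
    then have "g \<in> ?B" if "g \<in> {e, f, e', f'}" for g
      using that is_edge_fst_le_snd[of c g] by (cases g) (auto simp: quad_relation_def)
    then show "p \<in> (\<lambda>(e, f, e', f'). quad_binomial e f e' f') ` (?B \<times> ?B \<times> ?B \<times> ?B)"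
      unfolding p by (intro image_eqI[of _ _ "(e, f, e', f')"]) auto
  qed
  then show ?thesis
    by (rule finite_subset) simp
qed

lemma quadric_quad_binomial: "quadric (quad_binomial e f e' f')"
proof -
  have "Poly_Mapping.keys (quad_binomial e f e' f') \<subseteq> {edge_pair e f, edge_pair e' f'}"
    unfolding quad_binomial_def by (rule order_trans[OF keys_diff]) simp
  then show ?thesis
    by (auto simp: quadric_def total_deg_edge_pair)
qed

lemma quad_relation_phi_exp_eq:
  "quad_relation c e f e' f' \<Longrightarrow> phi_exp (edge_pair e f) = phi_exp (edge_pair e' f')"
  unfolding quad_relation_def by (simp add: phi_exp_edge_pair[of c])

lemma quad_binomial_in_presIdeal:
  assumes "quad_relation c e f e' f'"
  shows "quad_binomial e f e' f' \<in> presIdeal c"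
proof -
  have "quad_binomial e f e' f' \<in> srcRing c"
    using assms unfolding quad_binomial_def quad_relation_def
    by (intro srcRing.diff_mem monomial_in_srcRing)
      (auto simp: keys_edge_pair edge_var_in_srcVars)
  moreover have "phi (quad_binomial e f e' f') = 0"
    using quad_relation_phi_exp_eq[OF assms]
    by (simp add: quad_binomial_def phi_eq_map_monomials map_monomials_diff)
  ultimately show ?thesis
    by (simp add: presIdeal_def)
qed

lemma endpoints_shift_edge: "endpoints (shift_edge k e) = image_mset (\<lambda>x. x + k) (endpoints e)"
  by (cases e) simp

lemma sh_quad_binomial:
  "sh k (quad_binomial e f e' f') =
     quad_binomial (shift_edge k e) (shift_edge k f) (shift_edge k e') (shift_edge k f')"
  by (simp add: quad_binomial_def sh_eq_map_monomials map_monomials_diff sh_exp_edge_pair)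

lemma quad_relation_shift_edge:
  assumes "quad_relation c e f e' f'"
  shows "quad_relation c (shift_edge k e) (shift_edge k f) (shift_edge k e') (shift_edge k f')"
proof -
  have "is_edge c (shift_edge k g)" if "is_edge c g" for g
    using that by (cases g) simp
  moreover have "image_mset (\<lambda>x. x + k) (endpoints e + endpoints f)
               = image_mset (\<lambda>x. x + k) (endpoints e' + endpoints f')"
    using assms by (simp add: quad_relation_def)
  ultimately show ?thesis
    using assms by (simp add: quad_relation_def endpoints_shift_edge)
qed

lemma shifted_quad_gens_subset_presIdeal:
  "{sh k f | f k. f \<in> quad_gens c} \<subseteq> presIdeal c"
proof
  fix p
  assume "p \<in> {sh k f | f k. f \<in> quad_gens c}"
  then obtain k e f e' f' where "p = sh k (quad_binomial e f e' f')" "quad_relation c e f e' f'"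
    by (auto simp: quad_gens_def)
  then show "p \<in> presIdeal c"
    using quad_binomial_in_presIdeal[OF quad_relation_shift_edge] by (simp add: sh_quad_binomial)
qed

lemma quad_binomial_in_shifted_quad_gens:
  assumes rel: "quad_relation c e f e' f'" and "1 \<le> s"
    and window: "\<forall>g\<in>{e, f, e', f'}. s \<le> fst g \<and> snd g \<le> s + 2 * c"
  shows "(quad_binomial e f e' f' :: (nat \<times> nat, 'k::comm_ring_1) mpoly) \<in> {sh k g | g k. g \<in> quad_gens c}"
proof -
  define k where "k = s - 1"
  define unshift where "unshift g = (fst g - k, snd g - k)" for g :: "nat \<times> nat"
  have bounds: "is_edge c g" "s \<le> fst g" "snd g \<le> s + 2 * c" if "g \<in> {e, f, e', f'}" for g
    using that window rel by (auto simp: quad_relation_def)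
  have shift_unshift: "shift_edge k (unshift g) = g" if "g \<in> {e, f, e', f'}" for g
    using bounds[OF that] is_edge_fst_le_snd[OF bounds(1)[OF that]] \<open>1 \<le> s\<close>
    by (cases g) (simp add: unshift_def k_def)
  have "is_edge c (unshift g) \<and> snd (unshift g) \<le> 2 * c + 1" if "g \<in> {e, f, e', f'}" for g
    using bounds[OF that] \<open>1 \<le> s\<close> by (cases g) (auto simp: unshift_def k_def)
  moreover have "endpoints (unshift g) = image_mset (\<lambda>x. x - k) (endpoints g)" for g
    by (cases g) (simp add: unshift_def)
  ultimately have "quad_relation c (unshift e) (unshift f) (unshift e') (unshift f')
      \<and> (\<forall>g\<in>{unshift e, unshift f, unshift e', unshift f'}. snd g \<le> 2 * c + 1)"
    using rel by (simp add: quad_relation_def flip: image_mset_union)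
  then have "(quad_binomial (unshift e) (unshift f) (unshift e') (unshift f') :: (nat \<times> nat, 'k) mpoly)
      \<in> quad_gens c"
    unfolding quad_gens_def by blast
  moreover have "sh k (quad_binomial (unshift e) (unshift f) (unshift e') (unshift f'))
      = (quad_binomial e f e' f' :: (nat \<times> nat, 'k) mpoly)"
    by (simp add: sh_quad_binomial shift_unshift)
  ultimately show ?thesis
    by (metis (mono_tags, lifting) mem_Collect_eq)
qed

lemma quad_ideal_subset_presIdeal: "(quad_ideal c :: (nat \<times> nat, 'k::comm_ring_1) mpoly set) \<subseteq> presIdeal c"
proof (rule ideal_gen_subset)
  show "(0 :: (nat \<times> nat, 'k) mpoly) \<in> presIdeal c"
    by (simp add: presIdeal_def srcRing.zero_mem phi_eq_map_monomials)
  show "a + b \<in> presIdeal c" if "a \<in> presIdeal c" "b \<in> presIdeal c" for a b :: "(nat \<times> nat, 'k) mpoly"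
    using that by (simp add: presIdeal_def srcRing.add_mem phi_eq_map_monomials map_monomials_add)
  show "r * g \<in> presIdeal c"
    if "r \<in> srcRing c" "g \<in> {sh k f | f k. f \<in> quad_gens c}" for r g :: "(nat \<times> nat, 'k) mpoly"
  proof -
    have "g \<in> presIdeal c"
      using that(2) shifted_quad_gens_subset_presIdeal by blast
    with that(1) show ?thesis
      by (simp add: presIdeal_def srcRing.mult_mem phi_mult)
  qed
qed

lemma exchange_edges:
  assumes "is_edge c (s, t)" "is_edge c (s', z)" "s \<le> s'" "s' \<le> t"
  shows "quad_relation c (s, t) (s', z) (s, s') (min t z, max t z)"
    and "(quad_binomial (s, t) (s', z) (s, s') (min t z, max t z) :: (nat \<times> nat, 'k::comm_ring_1) mpoly)
           \<in> {sh k f | f k. f \<in> quad_gens c}"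
proof -
  show rel: "quad_relation c (s, t) (s', z) (s, s') (min t z, max t z)"
    using assms by (cases "t \<le> z") (auto simp: quad_relation_def add_mset_commute)
  show "(quad_binomial (s, t) (s', z) (s, s') (min t z, max t z) :: (nat \<times> nat, 'k) mpoly)
          \<in> {sh k f | f k. f \<in> quad_gens c}"
    using assms by (intro quad_binomial_in_shifted_quad_gens[OF rel, of s]) auto
qed

lemma exchange_monomial:
  assumes "is_edge c (s, t)" "is_edge c (s', z)" "s \<le> s'" "s' \<le> t"
    and r: "Poly_Mapping.keys r \<subseteq> srcVars c"
  defines "m \<equiv> edge_pair (s, t) (s', z) + r" and "m' \<equiv> edge_pair (s, s') (min t z, max t z) + r"
  shows "Poly_Mapping.keys m' \<subseteq> srcVars c" and "phi_exp m' = phi_exp m" and "total_deg m' = total_deg m"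
    and "(Poly_Mapping.single m 1 - Poly_Mapping.single m' 1 :: (nat \<times> nat, 'k::comm_ring_1) mpoly)
           \<in> quad_ideal c"
proof -
  note rel = exchange_edges(1)[OF assms(1-4)]
  then show "Poly_Mapping.keys m' \<subseteq> srcVars c"
    using r by (auto simp: m'_def keys_add_nat keys_edge_pair quad_relation_def edge_var_in_srcVars)
  show "phi_exp m' = phi_exp m"
    using quad_relation_phi_exp_eq[OF rel] by (simp add: m_def m'_def phi_exp_add)
  show "total_deg m' = total_deg m"
    by (simp add: m_def m'_def total_deg_add total_deg_edge_pair)
  have "(Poly_Mapping.single m 1 - Poly_Mapping.single m' 1 :: (nat \<times> nat, 'k) mpoly)
      = Poly_Mapping.single r 1 * quad_binomial (s, t) (s', z) (s, s') (min t z, max t z)"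
    by (simp add: m_def m'_def quad_binomial_def mult_single right_diff_distrib add.commute)
  also have "\<dots> \<in> quad_ideal c"
    using r exchange_edges(2)[OF assms(1-4)]
    by (intro srcRing.ideal_gen_generator monomial_in_srcRing)
  finally show "(Poly_Mapping.single m 1 - Poly_Mapping.single m' 1 :: (nat \<times> nat, 'k) mpoly) \<in> quad_ideal c" .
qed

section \<open>Reduction of binomials to shifted quadrics\<close>

lemma least_vertex_edge:
  assumes "Poly_Mapping.keys m \<subseteq> srcVars c" "s \<in> Poly_Mapping.keys (phi_exp m)"
    and "\<And>x. x \<in> Poly_Mapping.keys (phi_exp m) \<Longrightarrow> s \<le> x"
  obtains t where "is_edge c (s, t)" "edge_var (s, t) \<in> Poly_Mapping.keys m"
proof -
  obtain i j where ij: "(i, j) \<in> Poly_Mapping.keys m" "s = j \<or> s = i + j - 1"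
    using assms(2) by (auto simp: keys_phi_exp)
  then have edge: "is_edge c (j, i + j - 1)" "edge_var (j, i + j - 1) = (i, j)"
    using assms(1) srcVars_edge_var by blast+
  have "s \<le> j"
    using ij(1) assms(3) by (force simp: keys_phi_exp)
  with ij(2) edge(1) have "s = j"
    by auto
  with edge ij(1) have "is_edge c (s, i + j - 1)" "edge_var (s, i + j - 1) \<in> Poly_Mapping.keys m"
    by simp_all
  then show thesis
    by (rule that)
qed

definition least_edge :: "(nat \<Rightarrow>\<^sub>0 nat) \<Rightarrow> nat \<times> nat" where
  "least_edge d =
     (let s = Min (Poly_Mapping.keys d) in (s, Min (Poly_Mapping.keys (d - Poly_Mapping.single s 1))))"

lemma least_vertex_decomposition:
  assumes src: "Poly_Mapping.keys m \<subseteq> srcVars c" and "m \<noteq> 0"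
  obtains s t s' r where "least_edge (phi_exp m) = (s, s')" "is_edge c (s, t)" "s \<le> s'" "s' \<le> t"
    and "m = Poly_Mapping.single (edge_var (s, t)) 1 + r" "Poly_Mapping.keys r \<subseteq> srcVars c"
    and "s' = t \<or> s' \<in> Poly_Mapping.keys (phi_exp r) \<and> (\<forall>x\<in>Poly_Mapping.keys (phi_exp r). s' \<le> x)"
proof -
  let ?d = "phi_exp m"
  define s where "s = Min (Poly_Mapping.keys ?d)"
  have "Poly_Mapping.keys ?d \<noteq> {}"
    using \<open>m \<noteq> 0\<close> by (simp add: phi_exp_eq_0_iff)
  then have s: "s \<in> Poly_Mapping.keys ?d" "\<And>x. x \<in> Poly_Mapping.keys ?d \<Longrightarrow> s \<le> x"
    unfolding s_def by simp_all
  obtain t where st: "is_edge c (s, t)" "edge_var (s, t) \<in> Poly_Mapping.keys m"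
    using least_vertex_edge[OF src s] .
  define r where "r = m - Poly_Mapping.single (edge_var (s, t)) 1"
  have m_r: "m = Poly_Mapping.single (edge_var (s, t)) 1 + r"
    unfolding r_def by (rule single_add_diff_single[OF st(2), symmetric])
  have r_src: "Poly_Mapping.keys r \<subseteq> srcVars c"
    unfolding r_def by (rule order_trans[OF keys_diff_single_subset src])
  define d' where "d' = ?d - Poly_Mapping.single s 1"
  have "?d = Poly_Mapping.single s 1 + (Poly_Mapping.single t 1 + phi_exp r)"
    unfolding m_r phi_exp_add phi_exp_edge_var[OF st(1)] by (simp add: add.assoc)
  then have d': "d' = Poly_Mapping.single t 1 + phi_exp r" and d_d': "?d = Poly_Mapping.single s 1 + d'"
    by (simp_all add: d'_def)
  define s' where "s' = Min (Poly_Mapping.keys d')"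
  have "t \<in> Poly_Mapping.keys d'"
    by (simp add: d' keys_add_nat)
  then have s': "s' \<in> Poly_Mapping.keys d'" "s' \<le> t" "\<And>x. x \<in> Poly_Mapping.keys d' \<Longrightarrow> s' \<le> x"
    unfolding s'_def by (auto intro: Min_in simp del: keys_eq_empty)
  have "s \<le> s'"
    using s(2) s'(1) by (simp add: d_d' keys_add_nat)
  have "least_edge ?d = (s, s')"
    by (simp add: least_edge_def Let_def s_def s'_def d'_def)
  moreover have "s' = t \<or> s' \<in> Poly_Mapping.keys (phi_exp r)
                           \<and> (\<forall>x\<in>Poly_Mapping.keys (phi_exp r). s' \<le> x)"
    using s'(1,3) by (auto simp: d' keys_add_nat)
  ultimately show thesis
    using that st(1) \<open>s \<le> s'\<close> s'(2) m_r r_src by blast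
qed

lemma exists_monomial_with_least_edge:
  assumes src: "Poly_Mapping.keys m \<subseteq> srcVars c" and "m \<noteq> 0"
  obtains m' where "Poly_Mapping.keys m' \<subseteq> srcVars c" "phi_exp m' = phi_exp m"
    "total_deg m' = total_deg m" "edge_var (least_edge (phi_exp m)) \<in> Poly_Mapping.keys m'"
    "(Poly_Mapping.single m 1 - Poly_Mapping.single m' 1 :: (nat \<times> nat, 'k::comm_ring_1) mpoly)
       \<in> quad_ideal c"
proof -
  obtain s t s' r where least: "least_edge (phi_exp m) = (s, s')"
    and st: "is_edge c (s, t)" "s \<le> s'" "s' \<le> t"
    and m_r: "m = Poly_Mapping.single (edge_var (s, t)) 1 + r" and r_src: "Poly_Mapping.keys r \<subseteq> srcVars c"
    and next_vertex: "s' = t \<or> s' \<in> Poly_Mapping.keys (phi_exp r)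
                                  \<and> (\<forall>x\<in>Poly_Mapping.keys (phi_exp r). s' \<le> x)"
    using least_vertex_decomposition[OF assms] .
  from next_vertex show thesis
  proof
    assume "s' = t"
    then show thesis
      using that[of m] src least m_r by (simp add: keys_add_nat srcRing.ideal_gen_zero)
  next
    assume "s' \<in> Poly_Mapping.keys (phi_exp r) \<and> (\<forall>x\<in>Poly_Mapping.keys (phi_exp r). s' \<le> x)"
    then obtain z where s'z: "is_edge c (s', z)" "edge_var (s', z) \<in> Poly_Mapping.keys r"
      using least_vertex_edge[OF r_src] by blast
    define r' where "r' = r - Poly_Mapping.single (edge_var (s', z)) 1"
    have "m = edge_pair (s, t) (s', z) + r'"
      unfolding m_r r'_def edge_pair_def using single_add_diff_single[OF s'z(2)] by (simp add: add.assoc)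
    moreover have "Poly_Mapping.keys r' \<subseteq> srcVars c"
      unfolding r'_def by (rule order_trans[OF keys_diff_single_subset r_src])
    ultimately show thesis
      using exchange_monomial[OF st(1) s'z(1) st(2,3), of r'] least
        that[of "edge_pair (s, s') (min t z, max t z) + r'"]
      by (simp add: keys_add_nat keys_edge_pair)
  qed
qed

lemma binomial_add_var_in_quad_ideal:
  assumes "v \<in> srcVars c"
    and "(Poly_Mapping.single a 1 - Poly_Mapping.single b 1 :: (nat \<times> nat, 'k::comm_ring_1) mpoly) \<in> quad_ideal c"
  shows "(Poly_Mapping.single (Poly_Mapping.single v 1 + a) 1 - Poly_Mapping.single (Poly_Mapping.single v 1 + b) 1
          :: (nat \<times> nat, 'k) mpoly) \<in> quad_ideal c"
proof -
  have "(Poly_Mapping.single (Poly_Mapping.single v 1) 1 :: (nat \<times> nat, 'k) mpoly)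
        * (Poly_Mapping.single a 1 - Poly_Mapping.single b 1) \<in> quad_ideal c"
    using assms by (intro srcRing.ideal_gen_mult monomial_in_srcRing) auto
  then show ?thesis
    by (simp add: mult_single right_diff_distrib)
qed

lemma binomial_in_quad_ideal:
  assumes "Poly_Mapping.keys m1 \<subseteq> srcVars c" "Poly_Mapping.keys m2 \<subseteq> srcVars c"
    and "phi_exp m1 = phi_exp m2"
  shows "(Poly_Mapping.single m1 1 - Poly_Mapping.single m2 1 :: (nat \<times> nat, 'k::comm_ring_1) mpoly)
           \<in> quad_ideal c"
  using assms
proof (induction "total_deg m1" arbitrary: m1 m2 rule: less_induct)
  case less
  show ?case
  proof (cases "m1 = 0")
    case True
    then have "m2 = 0"
      using less.prems(3) phi_exp_eq_0_iff by metis
    with True show ?thesis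
      by (simp add: srcRing.ideal_gen_zero)
  next
    case False
    then have "m2 \<noteq> 0"
      using less.prems(3) phi_exp_eq_0_iff by metis
    obtain m1' where m1': "Poly_Mapping.keys m1' \<subseteq> srcVars c" "phi_exp m1' = phi_exp m1"
        "total_deg m1' = total_deg m1" "edge_var (least_edge (phi_exp m1)) \<in> Poly_Mapping.keys m1'"
        "(Poly_Mapping.single m1 1 - Poly_Mapping.single m1' 1 :: (nat \<times> nat, 'k) mpoly) \<in> quad_ideal c"
      using exists_monomial_with_least_edge[OF less.prems(1) False] by blast
    obtain m2' where m2': "Poly_Mapping.keys m2' \<subseteq> srcVars c" "phi_exp m2' = phi_exp m2"
        "edge_var (least_edge (phi_exp m2)) \<in> Poly_Mapping.keys m2'"
        "(Poly_Mapping.single m2 1 - Poly_Mapping.single m2' 1 :: (nat \<times> nat, 'k) mpoly) \<in> quad_ideal c"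
      using exists_monomial_with_least_edge[OF less.prems(2) \<open>m2 \<noteq> 0\<close>] by blast
    define v where "v = edge_var (least_edge (phi_exp m1))"
    define a where "a = m1' - Poly_Mapping.single v 1"
    define b where "b = m2' - Poly_Mapping.single v 1"
    have a: "m1' = Poly_Mapping.single v 1 + a"
      unfolding a_def v_def by (rule single_add_diff_single[OF m1'(4), symmetric])
    have b: "m2' = Poly_Mapping.single v 1 + b"
      unfolding b_def v_def using single_add_diff_single[OF m2'(3)] less.prems(3) by simp
    have "phi_exp (Poly_Mapping.single v 1) + phi_exp a = phi_exp (Poly_Mapping.single v 1) + phi_exp b"
      using m1'(2) m2'(2) less.prems(3) by (metis a b phi_exp_add)
    then have "phi_exp a = phi_exp b"
      by simp
    moreover have "total_deg a < total_deg m1"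
      using m1'(3) by (simp add: a total_deg_add)
    moreover have "Poly_Mapping.keys a \<subseteq> srcVars c" "Poly_Mapping.keys b \<subseteq> srcVars c"
      unfolding a_def b_def by (rule order_trans[OF keys_diff_single_subset m1'(1)],
                                rule order_trans[OF keys_diff_single_subset m2'(1)])
    ultimately have "(Poly_Mapping.single a 1 - Poly_Mapping.single b 1 :: (nat \<times> nat, 'k) mpoly) \<in> quad_ideal c"
      using less.hyps by blast
    then have "(Poly_Mapping.single m1' 1 - Poly_Mapping.single m2' 1 :: (nat \<times> nat, 'k) mpoly) \<in> quad_ideal c"
      unfolding a b using m1'(1,4) by (intro binomial_add_var_in_quad_ideal) (auto simp: v_def)
    then show ?thesis
      by (rule srcRing.ideal_gen_diff_trans[OF m1'(5) _ m2'(4)])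
  qed
qed

lemma presIdeal_subset_quad_ideal: "presIdeal c \<subseteq> (quad_ideal c :: (nat \<times> nat, 'k::comm_ring_1) mpoly set)"
proof
  fix p :: "(nat \<times> nat, 'k) mpoly"
  assume "p \<in> presIdeal c"
  then have src: "\<And>m. m \<in> Poly_Mapping.keys p \<Longrightarrow> Poly_Mapping.keys m \<subseteq> srcVars c"
    and kernel: "map_monomials phi_exp p = 0"
    by (auto simp: presIdeal_def srcRing_def mvars_subset_iff phi_eq_map_monomials)
  obtain \<rho> where \<rho>: "\<And>m. m \<in> Poly_Mapping.keys p \<Longrightarrow>
                            \<rho> m \<in> Poly_Mapping.keys p \<and> phi_exp (\<rho> m) = phi_exp m"
    and p: "p = (\<Sum>m\<in>Poly_Mapping.keys p. Poly_Mapping.single m (Poly_Mapping.lookup p m)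
                                           - Poly_Mapping.single (\<rho> m) (Poly_Mapping.lookup p m))"
    using map_monomials_eq_0_imp_binomial_sum[OF kernel] by blast
  have "Poly_Mapping.single m (Poly_Mapping.lookup p m) - Poly_Mapping.single (\<rho> m) (Poly_Mapping.lookup p m)
        \<in> quad_ideal c" if "m \<in> Poly_Mapping.keys p" for m
  proof -
    have "(Poly_Mapping.single 0 (Poly_Mapping.lookup p m) :: (nat \<times> nat, 'k) mpoly)
          * (Poly_Mapping.single m 1 - Poly_Mapping.single (\<rho> m) 1) \<in> quad_ideal c"
      using src \<rho> that by (intro srcRing.ideal_gen_mult monomial_in_srcRing binomial_in_quad_ideal) auto
    then show ?thesis
      by (simp add: mult_single right_diff_distrib)
  qed
  then show "p \<in> quad_ideal c"
    by (subst p) (rule srcRing.ideal_gen_sum)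
qed

theorem proposition6p10:
  fixes c :: nat
  assumes "c \<ge> 1"
  shows "\<exists>F :: (nat \<times> nat, 'k::field) mpoly set.
           finite F \<and> F \<subseteq> presIdeal c \<and> (\<forall>f\<in>F. quadric f) \<and>
           ideal_gen (srcRing c) {sh k f | f k. f \<in> F} = presIdeal c"
proof (intro exI[of _ "quad_gens c"] conjI)
  \<comment> \<open>The argument also works for \<open>c = 0\<close>.\<close>
  show "finite (quad_gens c)"
    by (rule finite_quad_gens)
  show "quad_gens c \<subseteq> presIdeal c"
    by (auto simp: quad_gens_def intro: quad_binomial_in_presIdeal)
  show "\<forall>f\<in>quad_gens c. quadric f"
    by (auto simp: quad_gens_def quadric_quad_binomial)
  show "quad_ideal c = (presIdeal c :: (nat \<times> nat, 'k) mpoly set)"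
    by (rule subset_antisym[OF quad_ideal_subset_presIdeal presIdeal_subset_quad_ideal])
qed

end
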